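(* Let $\theta\in[0,1]$ and $\Delta t,\Delta x>0$ satisfy $\Delta t(1-2\theta)\le\frac{\Delta x^3}{4}$. Then for every sequence $a\in\ell^2_\Delta(\mathbb Z)$, $$\|\mathcal A_{-(1-\theta)}a\|^2_{\ell^2_\Delta}\le\|\mathcal A_\theta a\|^2_{\ell^2_\Delta}.$$
   Context: For a sequence $a=(a_j)_{j\in\mathbb Z}$: $D_+(a)_j=(a_{j+1}-a_j)/\Delta x$, $D_-(a)_j=(a_j-a_{j-1})/\Delta x$; $\|a\|_{\ell^2_\Delta}=(\Delta x\sum_j a_j^2)^{1/2}$. For $\alpha\in\mathbb R$, $\mathcal A_\alpha=I+\alpha\Delta tD_+D_+D_-$; thus $\mathcal A_{-(1-\theta)}=I-(1-\theta)\Delta tD_+D_+D_-$. *)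

theory Defs
  imports "HOL-Analysis.Analysis"
begin

definition Dplus :: "real \<Rightarrow> (int \<Rightarrow> real) \<Rightarrow> (int \<Rightarrow> real)" where
  "Dplus dx a = (\<lambda>j. (a (j + 1) - a j) / dx)"

definition Dminus :: "real \<Rightarrow> (int \<Rightarrow> real) \<Rightarrow> (int \<Rightarrow> real)" where
  "Dminus dx a = (\<lambda>j. (a j - a (j - 1)) / dx)"

text \<open>Membership in l^2 over the integers (the weight dx does not affect membership).\<close>
definition in_l2 :: "(int \<Rightarrow> real) \<Rightarrow> bool" where
  "in_l2 a \<longleftrightarrow> (\<lambda>j. (a j)^2) summable_on UNIV"

definition l2_norm_sq :: "real \<Rightarrow> (int \<Rightarrow> real) \<Rightarrow> real" where
  "l2_norm_sq dx a = dx * (\<Sum>\<^sub>\<infinity>j\<in>UNIV. (a j)^2)"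

definition Aop :: "real \<Rightarrow> real \<Rightarrow> real \<Rightarrow> (int \<Rightarrow> real) \<Rightarrow> (int \<Rightarrow> real)" where
  "Aop alpha dt dx a = (\<lambda>j. a j + alpha * dt * Dplus dx (Dplus dx (Dminus dx a)) j)"

end

(* With L = D+ D+ D- a, both operators have the form a + s dt L, so
   ||A_theta a||^2 - ||A_{-(1-theta)} a||^2 = dx (2 dt <a, L> + (2 theta - 1) dt^2 ||L||^2)
   (unweighted sums inside). Two summations by parts give <a, L> = (dx/2) ||D+ D- a||^2,
   and (x - y)^2 <= 2 x^2 + 2 y^2 gives ||L||^2 <= (4/dx^2) ||D+ D- a||^2.  For theta >= 1/2 both
   terms are nonnegative; otherwise the condition dt (1 - 2 theta) <= dx^3/4 is exactly what
   lets the first term absorb the second. *)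

theory Submission
  imports Defs
begin

lemma bij_betw_shift_int: "bij_betw (\<lambda>j::int. j + k) UNIV UNIV"
  by (rule bij_betwI[where g = "\<lambda>j. j - k"]) auto

lemma infsum_shift_int: "(\<Sum>\<^sub>\<infinity>j. f (j + k)) = (\<Sum>\<^sub>\<infinity>j::int. f j)"
  using infsum_reindex_bij_betw[OF bij_betw_shift_int, of f k] by simp

lemma in_l2_shift: "in_l2 a \<Longrightarrow> in_l2 (\<lambda>j. a (j + k))"
  unfolding in_l2_def
  using summable_on_reindex_bij_betw[OF bij_betw_shift_int, of "\<lambda>j. (a j)^2" k] by simp

lemma summable_on_abs_bound_real:
  fixes f g :: "'a \<Rightarrow> real"
  assumes "g summable_on A" and "\<And>x. \<bar>f x\<bar> \<le> g x"
  shows "f summable_on A"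
proof -
  have "(\<lambda>x. norm (f x)) summable_on A"
    by (rule Infinite_Sum.abs_summable_on_comparison_test'[OF assms(1)]) (simp add: assms(2))
  then show ?thesis
    using summable_on_iff_abs_summable_on_real by blast
qed

lemma summable_on_mult_in_l2:
  assumes "in_l2 a" and "in_l2 b"
  shows "(\<lambda>j. a j * b j) summable_on UNIV"
proof (rule summable_on_abs_bound_real)
  show "(\<lambda>j. (a j)^2 + (b j)^2) summable_on UNIV"
    using assms unfolding in_l2_def by (rule summable_on_add)
  fix j
  have "2 * \<bar>a j\<bar> * \<bar>b j\<bar> \<le> \<bar>a j\<bar>^2 + \<bar>b j\<bar>^2"
    using sum_squares_bound[of "\<bar>a j\<bar>" "\<bar>b j\<bar>"] by (simp add: power2_eq_square)
  moreover have "\<bar>a j * b j\<bar> \<le> 2 * \<bar>a j\<bar> * \<bar>b j\<bar>"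
    by (simp add: abs_mult)
  ultimately show "\<bar>a j * b j\<bar> \<le> (a j)^2 + (b j)^2"
    by simp
qed

lemma in_l2_lincomb:
  assumes "in_l2 a" and "in_l2 b"
  shows "in_l2 (\<lambda>j. c * a j + d * b j)"
  unfolding in_l2_def
proof (rule summable_on_abs_bound_real)
  show "(\<lambda>j. (2 * c^2) * (a j)^2 + (2 * d^2) * (b j)^2) summable_on UNIV"
    using assms unfolding in_l2_def by (intro summable_on_add summable_on_cmult_right)
  fix j
  have "0 \<le> (c * a j - d * b j)^2" by simp
  then have "(c * a j + d * b j)^2 \<le> (2 * c^2) * (a j)^2 + (2 * d^2) * (b j)^2"
    by (simp add: power2_eq_square algebra_simps)
  then show "\<bar>(c * a j + d * b j)^2\<bar> \<le> (2 * c^2) * (a j)^2 + (2 * d^2) * (b j)^2"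
    by simp
qed

lemma Dplus_eq_lincomb: "Dplus dx a = (\<lambda>j. (1/dx) * a (j + 1) + (-1/dx) * a j)"
  unfolding Dplus_def by (auto simp: diff_divide_distrib)

lemma Dminus_eq_lincomb: "Dminus dx a = (\<lambda>j. (1/dx) * a j + (-1/dx) * a (j + -1))"
  unfolding Dminus_def by (auto simp: diff_divide_distrib)

lemma in_l2_Dplus: "in_l2 a \<Longrightarrow> in_l2 (Dplus dx a)"
  unfolding Dplus_eq_lincomb by (intro in_l2_lincomb in_l2_shift)

lemma in_l2_Dminus: "in_l2 a \<Longrightarrow> in_l2 (Dminus dx a)"
  unfolding Dminus_eq_lincomb by (intro in_l2_lincomb in_l2_shift)

lemma infsum_lincomb_real:
  fixes f g :: "'a \<Rightarrow> real"
  assumes "f summable_on A" and "g summable_on A"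
  shows "(\<Sum>\<^sub>\<infinity>x\<in>A. c * f x + d * g x) = c * (\<Sum>\<^sub>\<infinity>x\<in>A. f x) + d * (\<Sum>\<^sub>\<infinity>x\<in>A. g x)"
  by (intro infsumI has_sum_add has_sum_cmult_right has_sum_infsum assms)

lemma summable_on_diff_real:
  fixes f g :: "'a \<Rightarrow> real"
  assumes "f summable_on A" and "g summable_on A"
  shows "(\<lambda>x. f x - g x) summable_on A"
  using summable_on_add[OF assms(1) summable_on_cmult_right[OF assms(2), of "-1"]] by simp

lemma infsum_diff_real:
  fixes f g :: "'a \<Rightarrow> real"
  assumes "f summable_on A" and "g summable_on A"
  shows "(\<Sum>\<^sub>\<infinity>x\<in>A. f x - g x) = (\<Sum>\<^sub>\<infinity>x\<in>A. f x) - (\<Sum>\<^sub>\<infinity>x\<in>A. g x)"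
  using infsum_lincomb_real[OF assms, of 1 "-1"] by simp

lemma infsum_square_add_scaled:
  assumes "in_l2 a" and "in_l2 b"
  shows "(\<Sum>\<^sub>\<infinity>j. (a j + s * b j)^2)
    = (\<Sum>\<^sub>\<infinity>j. (a j)^2) + 2 * s * (\<Sum>\<^sub>\<infinity>j. a j * b j) + s^2 * (\<Sum>\<^sub>\<infinity>j. (b j)^2)"
proof -
  have sa: "(\<lambda>j. (a j)^2) summable_on UNIV" and sb: "(\<lambda>j. (b j)^2) summable_on UNIV"
    using assms unfolding in_l2_def by auto
  have sab: "(\<lambda>j. a j * b j) summable_on UNIV"
    using assms by (rule summable_on_mult_in_l2)
  have "(\<Sum>\<^sub>\<infinity>j. (a j + s * b j)^2)
      = (\<Sum>\<^sub>\<infinity>j. (a j)^2 + ((2 * s) * (a j * b j) + s^2 * (b j)^2))"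
    by (rule infsum_cong) (simp add: power2_eq_square algebra_simps)
  also have "\<dots> = (\<Sum>\<^sub>\<infinity>j. (a j)^2) + (\<Sum>\<^sub>\<infinity>j. (2 * s) * (a j * b j) + s^2 * (b j)^2)"
    using sa sab sb by (intro infsum_add summable_on_add summable_on_cmult_right)
  also have "\<dots> = (\<Sum>\<^sub>\<infinity>j. (a j)^2) + ((2 * s) * (\<Sum>\<^sub>\<infinity>j. a j * b j) + s^2 * (\<Sum>\<^sub>\<infinity>j. (b j)^2))"
    by (simp only: infsum_lincomb_real[OF sab sb])
  finally show ?thesis
    by (simp only: add.assoc)
qed

lemma infsum_shift_square_diff:
  assumes "in_l2 f"
  shows "(\<Sum>\<^sub>\<infinity>j. (f (j + 1))^2 - (f j)^2) = 0"
  using in_l2_shift[OF assms, of 1] assms infsum_shift_int[of "\<lambda>j. (f j)^2" 1]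
  unfolding in_l2_def by (simp add: infsum_diff_real)

lemma infsum_mult_Dplus:
  assumes "in_l2 f" and "in_l2 g"
  shows "(\<Sum>\<^sub>\<infinity>j. f j * Dplus dx g j) = - (\<Sum>\<^sub>\<infinity>j. Dminus dx f j * g j)"
proof -
  have s1: "(\<lambda>j. f j * g (j + 1)) summable_on UNIV"
    using assms by (intro summable_on_mult_in_l2 in_l2_shift)
  have s0: "(\<lambda>j. f j * g j) summable_on UNIV"
    using assms by (rule summable_on_mult_in_l2)
  have s2: "(\<lambda>j. f (j + -1) * g j) summable_on UNIV"
    using assms by (intro summable_on_mult_in_l2 in_l2_shift)
  have shifted: "(\<Sum>\<^sub>\<infinity>j. f (j + -1) * g j) = (\<Sum>\<^sub>\<infinity>j. f j * g (j + 1))"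
    using infsum_shift_int[of "\<lambda>j. f (j + -1) * g j" 1] by simp
  have "(\<Sum>\<^sub>\<infinity>j. f j * Dplus dx g j)
      = (\<Sum>\<^sub>\<infinity>j. (1/dx) * (f j * g (j + 1)) + (-1/dx) * (f j * g j))"
    by (rule infsum_cong) (simp add: Dplus_eq_lincomb algebra_simps)
  also have "\<dots> = (1/dx) * (\<Sum>\<^sub>\<infinity>j. f j * g (j + 1)) + (-1/dx) * (\<Sum>\<^sub>\<infinity>j. f j * g j)"
    by (rule infsum_lincomb_real[OF s1 s0])
  also have "\<dots> = - ((1/dx) * (\<Sum>\<^sub>\<infinity>j. f j * g j) + (-1/dx) * (\<Sum>\<^sub>\<infinity>j. f (j + -1) * g j))"
    by (simp only: shifted)
  also have "\<dots> = - (\<Sum>\<^sub>\<infinity>j. (1/dx) * (f j * g j) + (-1/dx) * (f (j + -1) * g j))"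
    by (simp only: infsum_lincomb_real[OF s0 s2])
  also have "\<dots> = - (\<Sum>\<^sub>\<infinity>j. Dminus dx f j * g j)"
    by (rule arg_cong[where f = uminus], rule infsum_cong) (simp add: Dminus_eq_lincomb algebra_simps)
  finally show ?thesis .
qed

lemma infsum_mult_Dplus_self:
  assumes "in_l2 f"
  shows "(\<Sum>\<^sub>\<infinity>j. f j * Dplus dx f j) = - (dx / 2) * (\<Sum>\<^sub>\<infinity>j. (Dplus dx f j)^2)"
proof (cases "dx = 0")
  case True
  then show ?thesis by (simp add: Dplus_def)
next
  case False
  have sq: "(\<lambda>j. (f (j + 1))^2 - (f j)^2) summable_on UNIV"
    using in_l2_shift[OF assms, of 1] assms unfolding in_l2_def by (rule summable_on_diff_real)
  have sD: "(\<lambda>j. (Dplus dx f j)^2) summable_on UNIV"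
    using in_l2_Dplus[OF assms] unfolding in_l2_def .
  \<comment> \<open>a (b - a) = (b^2 - a^2)/2 - (b - a)^2/2, and the first part telescopes\<close>
  have "(\<Sum>\<^sub>\<infinity>j. f j * Dplus dx f j)
      = (\<Sum>\<^sub>\<infinity>j. (1 / (2 * dx)) * ((f (j + 1))^2 - (f j)^2) + (- (dx / 2)) * (Dplus dx f j)^2)"
    using False by (intro infsum_cong) (simp add: Dplus_def field_simps power2_eq_square)
  also have "\<dots> = (1 / (2 * dx)) * (\<Sum>\<^sub>\<infinity>j. (f (j + 1))^2 - (f j)^2)
      + (- (dx / 2)) * (\<Sum>\<^sub>\<infinity>j. (Dplus dx f j)^2)"
    by (rule infsum_lincomb_real[OF sq sD])
  finally show ?thesis
    by (simp only: infsum_shift_square_diff[OF assms])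
qed

lemma infsum_Dplus_square_le:
  assumes "in_l2 f"
  shows "(\<Sum>\<^sub>\<infinity>j. (Dplus dx f j)^2) \<le> 4 / dx^2 * (\<Sum>\<^sub>\<infinity>j. (f j)^2)"
proof -
  have sf: "(\<lambda>j. (f j)^2) summable_on UNIV" and sf1: "(\<lambda>j. (f (j + 1))^2) summable_on UNIV"
    using assms in_l2_shift[OF assms, of 1] unfolding in_l2_def by auto
  have "(\<Sum>\<^sub>\<infinity>j. (Dplus dx f j)^2) \<le> (\<Sum>\<^sub>\<infinity>j. (2/dx^2) * (f (j + 1))^2 + (2/dx^2) * (f j)^2)"
  proof (rule infsum_mono)
    show "(\<lambda>j. (Dplus dx f j)^2) summable_on UNIV"
      using in_l2_Dplus[OF assms] unfolding in_l2_def .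
    show "(\<lambda>j. (2/dx^2) * (f (j + 1))^2 + (2/dx^2) * (f j)^2) summable_on UNIV"
      using sf sf1 by (intro summable_on_add summable_on_cmult_right)
    fix j
    have "(f (j + 1) - f j)^2 \<le> 2 * (f (j + 1))^2 + 2 * (f j)^2"
      using zero_le_power2[of "f (j + 1) + f j"] by (simp add: power2_eq_square algebra_simps)
    then have "(f (j + 1) - f j)^2 / dx^2 \<le> (2 * (f (j + 1))^2 + 2 * (f j)^2) / dx^2"
      by (rule divide_right_mono) simp
    then show "(Dplus dx f j)^2 \<le> (2/dx^2) * (f (j + 1))^2 + (2/dx^2) * (f j)^2"
      by (simp add: Dplus_def power_divide add_divide_distrib)
  qed
  also have "\<dots> = (2/dx^2) * (\<Sum>\<^sub>\<infinity>j. (f (j + 1))^2) + (2/dx^2) * (\<Sum>\<^sub>\<infinity>j. (f j)^2)"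
    by (rule infsum_lincomb_real[OF sf1 sf])
  also have "\<dots> = 4 / dx^2 * (\<Sum>\<^sub>\<infinity>j. (f j)^2)"
    using infsum_shift_int[of "\<lambda>j. (f j)^2" 1] by simp
  finally show ?thesis .
qed

lemma infsum_mult_Dplus_Dplus_Dminus:
  assumes "in_l2 a"
  shows "(\<Sum>\<^sub>\<infinity>j. a j * Dplus dx (Dplus dx (Dminus dx a)) j)
    = dx / 2 * (\<Sum>\<^sub>\<infinity>j. (Dplus dx (Dminus dx a) j)^2)"
  using infsum_mult_Dplus[OF assms in_l2_Dplus[OF in_l2_Dminus[OF assms]]]
    infsum_mult_Dplus_self[OF in_l2_Dminus[OF assms]]
  by (simp add: mult.commute)

lemma dissipation_dominates:
  fixes \<theta> dt dx V Q :: real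
  assumes "dt > 0" and "dx > 0" and "0 \<le> Q" and "Q \<le> 4 / dx^2 * V"
    and "dt * (1 - 2 * \<theta>) \<le> dx ^ 3 / 4"
  shows "0 \<le> dt * dx * V + (2 * \<theta> - 1) * dt^2 * Q"
proof -
  have "0 \<le> 4 / dx^2 * V" and "0 < 4 / dx^2"
    using assms(2-4) by auto
  then have V: "0 \<le> V"
    by (simp only: zero_le_mult_iff) linarith
  show ?thesis
  proof (cases "2 * \<theta> - 1 \<ge> 0")
    case True
    then show ?thesis
      using V assms(1-3) by simp
  next
    case False
    have "(1 - 2 * \<theta>) * dt^2 * Q \<le> (1 - 2 * \<theta>) * dt^2 * (4 / dx^2 * V)"
      using False assms(4) by (intro mult_left_mono) auto
    also have "\<dots> = dt * (4 * (dt * (1 - 2 * \<theta>)) * V / dx^2)"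
      by (simp add: power2_eq_square)
    also have "\<dots> \<le> dt * (dx^3 * V / dx^2)"
      using assms(1,5) V by (intro mult_left_mono divide_right_mono mult_right_mono) auto
    also have "\<dots> = dt * dx * V"
      using assms(2) by (simp add: power2_eq_square power3_eq_cube)
    finally show ?thesis
      by (simp add: algebra_simps)
  qed
qed

theorem proposition5:
  fixes \<theta> dt dx :: real and a :: "int \<Rightarrow> real"
  assumes "0 \<le> \<theta>" and "\<theta> \<le> 1"
    and "dt > 0" and "dx > 0"
    and "dt * (1 - 2 * \<theta>) \<le> dx ^ 3 / 4"
    and "in_l2 a"
  shows "l2_norm_sq dx (Aop (-(1 - \<theta>)) dt dx a) \<le> l2_norm_sq dx (Aop \<theta> dt dx a)"
proof -
  define v where "v = Dplus dx (Dminus dx a)"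
  define V where "V = (\<Sum>\<^sub>\<infinity>j. (v j)^2)"
  define Q where "Q = (\<Sum>\<^sub>\<infinity>j. (Dplus dx v j)^2)"
  have v: "in_l2 v"
    unfolding v_def using assms(6) by (intro in_l2_Dplus in_l2_Dminus)
  have Aop_eq: "Aop s dt dx a = (\<lambda>j. a j + (s * dt) * Dplus dx v j)" for s
    unfolding Aop_def v_def by (simp add: mult.assoc)
  have "l2_norm_sq dx (Aop \<theta> dt dx a) - l2_norm_sq dx (Aop (-(1 - \<theta>)) dt dx a)
      = dx * (2 * dt * (\<Sum>\<^sub>\<infinity>j. a j * Dplus dx v j) + (2 * \<theta> - 1) * dt^2 * Q)"
    unfolding l2_norm_sq_def Aop_eq infsum_square_add_scaled[OF assms(6) in_l2_Dplus[OF v]] Q_def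
    by (simp add: power2_eq_square algebra_simps)
  also have "\<dots> = dx * (dt * dx * V + (2 * \<theta> - 1) * dt^2 * Q)"
    using infsum_mult_Dplus_Dplus_Dminus[OF assms(6), of dx] unfolding V_def v_def by simp
  finally have energy: "l2_norm_sq dx (Aop \<theta> dt dx a) - l2_norm_sq dx (Aop (-(1 - \<theta>)) dt dx a)
      = dx * (dt * dx * V + (2 * \<theta> - 1) * dt^2 * Q)" .
  have "0 \<le> Q"
    unfolding Q_def by (rule infsum_nonneg) simp
  moreover have "Q \<le> 4 / dx^2 * V"
    unfolding Q_def V_def by (rule infsum_Dplus_square_le[OF v])
  ultimately have "0 \<le> dt * dx * V + (2 * \<theta> - 1) * dt^2 * Q"
    using assms(3-5) by (intro dissipation_dominates)
  then have "0 \<le> dx * (dt * dx * V + (2 * \<theta> - 1) * dt^2 * Q)"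
    using assms(4) by simp
  then show ?thesis
    using energy by linarith
qed

end
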